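(* Let $n\geq1$, $q\geq2$ and $k\geq0$ be integers. (1) For every $j\in\{0,1,\dots,n\}$, $E_{\nu_n^{*k}}(\phi_j)=\left(1-\frac{jq}{n(q-1)}\right)^k$. (2) If moreover $(n-2)(q-1)\geq 2$, then $\mathrm{Var}_{\nu_n^{*k}}(\phi_1)\leq\frac1n$.
   Context: $X_n=\{0,\dots,q-1\}^n$, $x^{(0)}=(0,\dots,0)$, $d(x,y)=\#\{i:x_i\neq y_i\}$. The simple random walk on $X_n$ has transition probability $p_n(x,x')=\frac{1}{n(q-1)}$ if $d(x,x')=1$ and $0$ otherwise; $p_n^{(k)}$ is the $k$-step transition probability ($p_n^{(0)}(x,x')=\delta_{x,x'}$) and $\nu_n^{*k}(x)=p_n^{(k)}(x^{(0)},x)$. For $j\in\{0,\dots,n\}$, $\phi_j(x)=\sum_{r=0}^{j}\frac{(-j)_r(-l)_r}{(-n)_r\,r!}\left(\frac{q}{q-1}\right)^r$ with $l=d(x^{(0)},x)$ and $(\alpha)_r=\alpha(\alpha+1)\cdots(\alpha+r-1)$, $(\alpha)_0=1$. For a probability measure $\mu$ and function $f$ on $X_n$, $E_\mu(f)=\sum_x f(x)\mu(x)$ and $\mathrm{Var}_\mu(f)=E_\mu(f^2)-E_\mu(f)^2$. *)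

theory Defs
  imports "HOL-Analysis.Analysis"
begin

text \<open>The space X_n = {0,...,q-1}^n, represented as functions nat \<Rightarrow> nat that are
  below q on {0..<n} and equal to 0 outside {0..<n}.\<close>
definition Xn :: "nat \<Rightarrow> nat \<Rightarrow> (nat \<Rightarrow> nat) set" where
  "Xn q n = {x. (\<forall>i<n. x i < q) \<and> (\<forall>i\<ge>n. x i = 0)}"

definition x0 :: "nat \<Rightarrow> nat" where
  "x0 = (\<lambda>i. 0)"

definition hdist :: "nat \<Rightarrow> (nat \<Rightarrow> nat) \<Rightarrow> (nat \<Rightarrow> nat) \<Rightarrow> nat" where
  "hdist n x y = card {i \<in> {0..<n}. x i \<noteq> y i}"

definition trans_p :: "nat \<Rightarrow> nat \<Rightarrow> (nat \<Rightarrow> nat) \<Rightarrow> (nat \<Rightarrow> nat) \<Rightarrow> real" where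
  "trans_p q n x x' = (if hdist n x x' = 1 then 1 / (real n * (real q - 1)) else 0)"

fun trans_pk :: "nat \<Rightarrow> nat \<Rightarrow> nat \<Rightarrow> (nat \<Rightarrow> nat) \<Rightarrow> (nat \<Rightarrow> nat) \<Rightarrow> real" where
  "trans_pk q n 0 x x' = (if x = x' then 1 else 0)"
| "trans_pk q n (Suc k) x x' = (\<Sum>y\<in>Xn q n. trans_pk q n k x y * trans_p q n y x')"

definition nu_conv :: "nat \<Rightarrow> nat \<Rightarrow> nat \<Rightarrow> (nat \<Rightarrow> nat) \<Rightarrow> real" where
  "nu_conv q n k x = trans_pk q n k x0 x"

definition phi :: "nat \<Rightarrow> nat \<Rightarrow> nat \<Rightarrow> (nat \<Rightarrow> nat) \<Rightarrow> real" where
  "phi q n j x = (let l = hdist n x0 x in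
     \<Sum>r=0..j. pochhammer (- real j) r * pochhammer (- real l) r
               / (pochhammer (- real n) r * fact r) * (real q / (real q - 1)) ^ r)"

definition Exp :: "nat \<Rightarrow> nat \<Rightarrow> ((nat \<Rightarrow> nat) \<Rightarrow> real) \<Rightarrow> ((nat \<Rightarrow> nat) \<Rightarrow> real) \<Rightarrow> real" where
  "Exp q n \<mu> f = (\<Sum>x\<in>Xn q n. f x * \<mu> x)"

definition Var :: "nat \<Rightarrow> nat \<Rightarrow> ((nat \<Rightarrow> nat) \<Rightarrow> real) \<Rightarrow> ((nat \<Rightarrow> nat) \<Rightarrow> real) \<Rightarrow> real" where
  "Var q n \<mu> f = Exp q n \<mu> (\<lambda>x. (f x)^2) - (Exp q n \<mu> f)^2"

end

theory Submission
  imports Defs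
begin

text \<open>The function \<open>\<phi>\<^sub>j\<close> depends on \<open>x\<close> only through the distance \<open>l\<close> from \<open>x0\<close>: it is
  the Krawtchouk polynomial \<open>K\<^sub>j(l)\<close>. One step of the walk therefore acts on \<open>K\<^sub>j\<close> through a
  three-term expression in \<open>K\<^sub>j(l - 1), K\<^sub>j(l), K\<^sub>j(l + 1)\<close>, and the difference equation of the
  Krawtchouk polynomials makes \<open>\<phi>\<^sub>j\<close> an eigenfunction with eigenvalue
  \<open>\<lambda>\<^sub>j = 1 - jq/(n(q - 1))\<close>. Hence \<open>E(\<phi>\<^sub>j) = \<lambda>\<^sub>j^k \<phi>\<^sub>j(x0) = \<lambda>\<^sub>j^k\<close>.
  For the variance, \<open>\<phi>\<^sub>1\<^sup>2\<close> is a combination of \<open>\<phi>\<^sub>0, \<phi>\<^sub>1, \<phi>\<^sub>2\<close>, so its expectation is a combination of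
  \<open>1, \<lambda>\<^sub>1^k, \<lambda>\<^sub>2^k\<close>; the hypothesis makes \<open>\<lambda>\<^sub>2 \<ge> 0\<close>, and then \<open>\<lambda>\<^sub>2^k \<le> \<lambda>\<^sub>1^(2k)\<close> since
  \<open>\<lambda>\<^sub>2 \<le> \<lambda>\<^sub>1\<^sup>2\<close>.\<close>

lemma finite_Xn: "finite (Xn q n)"
proof -
  let ?f = "\<lambda>x::nat\<Rightarrow>nat. map x [0..<n]"
  have "?f ` Xn q n \<subseteq> {xs. set xs \<subseteq> {..<q} \<and> length xs = n}"
    by (force simp: Xn_def)
  then have "finite (?f ` Xn q n)"
    by (rule finite_subset) (rule finite_lists_length_eq, simp)
  moreover have "inj_on ?f (Xn q n)"
    by (rule inj_onI) (auto simp: Xn_def fun_eq_iff)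
  ultimately show ?thesis
    using finite_image_iff by blast
qed

lemma x0_in_Xn: "q \<ge> 1 \<Longrightarrow> x0 \<in> Xn q n"
  by (simp add: Xn_def x0_def)

lemma fun_upd_in_Xn: "x \<in> Xn q n \<Longrightarrow> i < n \<Longrightarrow> v < q \<Longrightarrow> x(i := v) \<in> Xn q n"
  by (auto simp: Xn_def)

lemma hdist_fun_upd: "i < n \<Longrightarrow> v \<noteq> x i \<Longrightarrow> hdist n x (x(i := v)) = 1"
proof -
  assume "i < n" "v \<noteq> x i"
  then have "{i'\<in>{0..<n}. x i' \<noteq> (x(i := v)) i'} = {i}"
    by auto
  then show ?thesis
    by (simp add: hdist_def)
qed

lemma hdist_eq_1_imp_fun_upd:
  assumes "x \<in> Xn q n" "y \<in> Xn q n" "hdist n x y = 1"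
  obtains i where "i < n" "y i \<noteq> x i" "y i < q" "y = x(i := y i)"
proof -
  from assms(3) obtain i where D: "{i'\<in>{0..<n}. x i' \<noteq> y i'} = {i}"
    unfolding hdist_def by (rule card_1_singletonE)
  then have i: "i < n" "x i \<noteq> y i"
    by auto
  have "y t = (x(i := y i)) t" for t
  proof (cases "t \<noteq> i \<and> t < n")
    case True
    then have "t \<notin> {i'\<in>{0..<n}. x i' \<noteq> y i'}"
      using D by blast
    with True show ?thesis
      by simp
  next
    case False
    then show ?thesis
      using assms(1,2) by (auto simp: Xn_def)
  qed
  then have "y = x(i := y i)" ..
  moreover have "y i < q"
    using assms(2) i by (auto simp: Xn_def)
  ultimately show ?thesis
    using i that by simp
qed

lemma hdist_x0_eq_card: "hdist n x0 y = card {i\<in>{0..<n}. y i \<noteq> 0}"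
proof -
  have "{i\<in>{0..<n}. x0 i \<noteq> y i} = {i\<in>{0..<n}. y i \<noteq> 0}"
    by (auto simp: x0_def)
  then show ?thesis
    by (simp add: hdist_def)
qed

lemma hdist_x0_fun_upd:
  assumes "i < n"
  shows "real (hdist n x0 (x(i := v)))
       = real (hdist n x0 x) - (if x i \<noteq> 0 then 1 else 0) + (if v \<noteq> 0 then 1 else 0)"
proof -
  define S where "S y = {t\<in>{0..<n}. y t \<noteq> 0}" for y :: "nat \<Rightarrow> nat"
  have card_S: "card (S y) = card (S y - {i}) + (if y i \<noteq> 0 then 1 else 0)" for y
    using assms card.remove[of "S y" i] by (auto simp: S_def)
  have "S (x(i := v)) - {i} = S x - {i}"
    by (auto simp: S_def)
  moreover have "hdist n x0 y = card (S y)" for y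
    by (simp add: hdist_x0_eq_card S_def)
  ultimately show ?thesis
    using card_S[of x] card_S[of "x(i := v)"] by simp
qed

subsection \<open>One step of the walk\<close>

lemma sum_trans_p:
  assumes x: "x \<in> Xn q n"
  shows "(\<Sum>y\<in>Xn q n. trans_p q n x y * g y)
       = 1 / (real n * (real q - 1)) * (\<Sum>i<n. \<Sum>v\<in>{..<q}-{x i}. g (x(i := v)))"
proof -
  define c where "c = 1 / (real n * (real q - 1))"
  define N where "N = {y\<in>Xn q n. hdist n x y = 1}"
  define h where "h = (\<lambda>(i::nat, v::nat). x(i := v))"
  define A where "A = Sigma {..<n} (\<lambda>i. {..<q}-{x i})"
  have "(\<Sum>y\<in>Xn q n. trans_p q n x y * g y) = (\<Sum>y\<in>Xn q n. if hdist n x y = 1 then c * g y else 0)"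
    by (rule sum.cong) (auto simp: trans_p_def c_def)
  also have "\<dots> = (\<Sum>y\<in>N. c * g y)"
    unfolding N_def by (rule sum.inter_filter[symmetric, OF finite_Xn])
  also have "N = h ` A"
  proof
    show "N \<subseteq> h ` A"
    proof
      fix y assume "y \<in> N"
      then obtain i where "i < n" "y i \<noteq> x i" "y i < q" "y = x(i := y i)"
        using hdist_eq_1_imp_fun_upd[OF x] unfolding N_def by blast
      then show "y \<in> h ` A"
        unfolding h_def A_def by (auto intro!: image_eqI[where x="(i, y i)"])
    qed
    show "h ` A \<subseteq> N"
      using x by (auto simp: h_def A_def N_def fun_upd_in_Xn hdist_fun_upd)
  qed
  also have "inj_on h A"
  proof (rule inj_onI)
    fix a b assume "a \<in> A" "b \<in> A" "h a = h b"
    then obtain i v i' v' where ab: "a = (i, v)" "b = (i', v')" "v \<noteq> x i" "v' \<noteq> x i'"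
      "x(i := v) = x(i' := v')"
      unfolding A_def h_def by auto
    then have "i = i'"
      by (metis fun_upd_apply)
    with ab show "a = b"
      by (metis fun_upd_same)
  qed
  then have "(\<Sum>y\<in>h ` A. c * g y) = (\<Sum>a\<in>A. c * g (h a))"
    by (simp add: sum.reindex)
  also have "\<dots> = c * (\<Sum>i<n. \<Sum>v\<in>{..<q}-{x i}. g (x(i := v)))"
    unfolding A_def h_def sum_distrib_left[symmetric]
    by (subst sum.Sigma) (auto simp: prod.case_distrib)
  finally show ?thesis
    unfolding c_def .
qed

text \<open>For a function \<open>f\<close> of the distance \<open>l\<close> from \<open>x0\<close>: of the \<open>n(q - 1)\<close> neighbours of a point
  at distance \<open>l\<close>, \<open>l\<close> are at distance \<open>l - 1\<close>, \<open>l(q-2)\<close> at distance \<open>l\<close> and \<open>(n-l)(q-1)\<close> at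
  distance \<open>l + 1\<close>.\<close>
definition radial_neighbour_sum :: "nat \<Rightarrow> nat \<Rightarrow> (real \<Rightarrow> real) \<Rightarrow> real \<Rightarrow> real" where
  "radial_neighbour_sum q n f l =
     l * f (l - 1) + l * (real q - 2) * f l + (real n - l) * (real q - 1) * f (l + 1)"

lemma sum_neighbours_radial:
  assumes x: "x \<in> Xn q n"
  shows "(\<Sum>i<n. \<Sum>v\<in>{..<q}-{x i}. f (real (hdist n x0 (x(i := v)))))
       = radial_neighbour_sum q n f (real (hdist n x0 x))"
proof -
  define l where "l = real (hdist n x0 x)"
  define \<alpha> where "\<alpha> = f (l - 1) + (real q - 2) * f l"
  define \<beta> where "\<beta> = (real q - 1) * f (l + 1)"
  have inner: "(\<Sum>v\<in>{..<q}-{x i}. f (real (hdist n x0 (x(i := v))))) = (if x i \<noteq> 0 then \<alpha> else \<beta>)"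
    if i: "i < n" for i
  proof (cases "x i = 0")
    case True
    have "q \<ge> 1"
      using x i by (auto simp: Xn_def)
    have "(\<Sum>v\<in>{..<q}-{x i}. f (real (hdist n x0 (x(i := v))))) = (\<Sum>v\<in>{..<q}-{0}. f (l + 1))"
      by (rule sum.cong) (auto simp: l_def hdist_x0_fun_upd[OF i] True)
    also have "\<dots> = \<beta>"
      using \<open>q \<ge> 1\<close> by (simp add: \<beta>_def of_nat_diff)
    finally show ?thesis
      using True by simp
  next
    case False
    have "x i < q"
      using x i by (simp add: Xn_def)
    have split: "{..<q}-{x i} = insert 0 ({..<q}-{0, x i})"
      using False \<open>x i < q\<close> by auto
    have "real (card ({..<q}-{0, x i})) = real q - 2"
      using False \<open>x i < q\<close> by (subst card_Diff_subset) (auto simp: of_nat_diff)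
    then have "(\<Sum>v\<in>{..<q}-{0, x i}. f l) = (real q - 2) * f l"
      by simp
    moreover have "(\<Sum>v\<in>{..<q}-{x i}. f (real (hdist n x0 (x(i := v)))))
        = f (l - 1) + (\<Sum>v\<in>{..<q}-{0, x i}. f l)"
      unfolding split
      by (subst sum.insert) (auto intro!: sum.cong simp: l_def hdist_x0_fun_upd[OF i] False)
    ultimately show ?thesis
      using False by (simp add: \<alpha>_def)
  qed
  have "(\<Sum>i<n. \<Sum>v\<in>{..<q}-{x i}. f (real (hdist n x0 (x(i := v)))))
      = (\<Sum>i<n. \<beta> + (if x i \<noteq> 0 then \<alpha> - \<beta> else 0))"
    by (rule sum.cong) (auto simp: inner)
  also have "\<dots> = real n * \<beta> + (\<Sum>i\<in>{i\<in>{..<n}. x i \<noteq> 0}. \<alpha> - \<beta>)"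
    by (simp only: sum.distrib sum.inter_filter[OF finite_lessThan]) simp
  also have "{i\<in>{..<n}. x i \<noteq> 0} = {i\<in>{0..<n}. x i \<noteq> 0}"
    by auto
  also have "real n * \<beta> + (\<Sum>i\<in>\<dots>. \<alpha> - \<beta>) = radial_neighbour_sum q n f l"
    by (simp add: hdist_x0_eq_card l_def \<alpha>_def \<beta>_def radial_neighbour_sum_def algebra_simps)
  finally show ?thesis
    unfolding l_def .
qed

lemma radial_neighbour_sum_const:
  "radial_neighbour_sum q n (\<lambda>_. c) l = (real q - 1) * real n * c"
  by (simp add: radial_neighbour_sum_def algebra_simps)

lemma radial_neighbour_sum_sum:
  "radial_neighbour_sum q n (\<lambda>y. \<Sum>r\<in>A. c r * g r y) l = (\<Sum>r\<in>A. c r * radial_neighbour_sum q n (g r) l)"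
  by (simp add: radial_neighbour_sum_def sum_distrib_left sum.distrib[symmetric] algebra_simps)

subsection \<open>Krawtchouk polynomials\<close>

lemma pochhammer_neg_pred:
  fixes x :: "'a :: comm_ring_1"
  shows "x * pochhammer (- (x - 1)) r = - pochhammer (- x) (Suc r)"
  by (simp add: pochhammer_rec algebra_simps)

lemma pochhammer_neg_succ_Suc:
  fixes x :: "'a :: comm_ring_1"
  shows "pochhammer (- (x + 1)) (Suc s) = pochhammer (- x) (Suc s) - of_nat (Suc s) * pochhammer (- x) s"
proof -
  have "pochhammer (- (x + 1)) (Suc s) = (- x - 1) * pochhammer (- x) s"
    by (subst pochhammer_rec) (simp add: algebra_simps)
  then show ?thesis
    by (simp add: pochhammer_Suc algebra_simps)
qed

lemma radial_neighbour_sum_pochhammer_Suc: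
  "radial_neighbour_sum q n (\<lambda>y. pochhammer (- y) (Suc s)) l
   = ((real q - 1) * real n - real q * (real s + 1)) * pochhammer (- l) (Suc s)
     + (real q - 1) * (real s + 1) * (real s - real n) * pochhammer (- l) s"
proof -
  have "l * pochhammer (- l) (Suc s) = (real s + 1) * pochhammer (- l) (Suc s) - pochhammer (- l) (Suc (Suc s))"
   and "l * pochhammer (- l) s = real s * pochhammer (- l) s - pochhammer (- l) (Suc s)"
    by (simp_all add: pochhammer_Suc algebra_simps)
  then show ?thesis
    unfolding radial_neighbour_sum_def pochhammer_neg_succ_Suc pochhammer_neg_pred of_nat_Suc
    by algebra
qed

definition krawtchouk_coeff :: "nat \<Rightarrow> nat \<Rightarrow> nat \<Rightarrow> nat \<Rightarrow> real" where
  "krawtchouk_coeff q n j r =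
     pochhammer (- real j) r / (pochhammer (- real n) r * fact r) * (real q / (real q - 1)) ^ r"

lemma krawtchouk_coeff_Suc:
  assumes "s < j" "j \<le> n" "q \<ge> 2"
  shows "krawtchouk_coeff q n j (Suc s) * ((real q - 1) * (real s + 1) * (real s - real n))
       = - krawtchouk_coeff q n j s * real q * (real j - real s)"
proof -
  define p where "p = real q / (real q - 1)"
  have "pochhammer (- real n) s \<noteq> 0"
    using assms by (auto simp: pochhammer_eq_0_iff)
  moreover have "real s - real n \<noteq> 0"
    using assms by auto
  moreover have "real s + 1 \<noteq> 0"
    by linarith
  ultimately have "krawtchouk_coeff q n j (Suc s)
      = krawtchouk_coeff q n j s * ((real s - real j) * p / ((real s - real n) * (real s + 1)))"
    unfolding krawtchouk_coeff_def p_def[symmetric]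
    by (simp add: pochhammer_Suc fact_Suc power_Suc field_simps)
  then have ratio: "krawtchouk_coeff q n j (Suc s) * ((real s - real n) * (real s + 1))
      = krawtchouk_coeff q n j s * (real s - real j) * p"
    using \<open>real s - real n \<noteq> 0\<close> \<open>real s + 1 \<noteq> 0\<close> by simp
  have "krawtchouk_coeff q n j (Suc s) * ((real q - 1) * (real s + 1) * (real s - real n))
      = krawtchouk_coeff q n j (Suc s) * ((real s - real n) * (real s + 1)) * (real q - 1)"
    by (simp only: mult_ac)
  also have "\<dots> = krawtchouk_coeff q n j s * (real s - real j) * (p * (real q - 1))"
    by (simp only: ratio mult.assoc)
  also have "p * (real q - 1) = real q"
    using assms by (simp add: p_def)
  finally show ?thesis
    by (simp add: algebra_simps)
qed

definition krawtchouk :: "nat \<Rightarrow> nat \<Rightarrow> nat \<Rightarrow> real \<Rightarrow> real" where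
  "krawtchouk q n j l = (\<Sum>r\<le>j. krawtchouk_coeff q n j r * pochhammer (- l) r)"

text \<open>The difference equation: the sum maps \<open>(-l)\<^sub>r\<close> to a combination of \<open>(-l)\<^sub>r\<close> and
  \<open>(-l)\<^sub>r\<^sub>-\<^sub>1\<close>, and the recursion of the coefficients makes the error terms telescope.\<close>
lemma radial_neighbour_sum_krawtchouk:
  assumes "j \<le> n" "q \<ge> 2"
  shows "radial_neighbour_sum q n (krawtchouk q n j) l
       = ((real q - 1) * real n - real j * real q) * krawtchouk q n j l"
proof -
  define c where "c = krawtchouk_coeff q n j"
  define A where "A r = pochhammer (- l) r" for r
  define \<theta> where "\<theta> = (real q - 1) * real n - real j * real q"
  define T where "T r = radial_neighbour_sum q n (\<lambda>y. pochhammer (- y) r) l - \<theta> * A r" for r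
  define D where "D r = c r * real q * (real j - real r) * A r" for r
  have T_Suc: "c (Suc s) * T (Suc s) = D (Suc s) - D s" if "s < j" for s
  proof -
    have "c (Suc s) * T (Suc s) = D (Suc s)
        + c (Suc s) * ((real q - 1) * (real s + 1) * (real s - real n)) * A s"
      unfolding T_def radial_neighbour_sum_pochhammer_Suc by (simp add: D_def A_def \<theta>_def algebra_simps)
    then show ?thesis
      unfolding c_def krawtchouk_coeff_Suc[OF that assms] by (simp add: D_def c_def)
  qed
  have "radial_neighbour_sum q n (krawtchouk q n j) l - \<theta> * krawtchouk q n j l = (\<Sum>r\<le>j. c r * T r)"
    unfolding krawtchouk_def radial_neighbour_sum_sum
    by (simp add: T_def A_def c_def sum_distrib_left sum_subtractf algebra_simps)
  also have "\<dots> = D j"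
  proof (cases j)
    case 0
    then show ?thesis
      by (simp add: T_def D_def A_def c_def \<theta>_def radial_neighbour_sum_const krawtchouk_coeff_def)
  next
    case (Suc m)
    have "c 0 * T 0 = D 0"
      by (simp add: T_def D_def A_def c_def \<theta>_def radial_neighbour_sum_const krawtchouk_coeff_def)
    moreover have "(\<Sum>s<j. c (Suc s) * T (Suc s)) = (\<Sum>s<j. D (Suc s) - D s)"
      by (rule sum.cong) (simp_all add: T_Suc)
    moreover have "(\<Sum>r\<le>j. c r * T r) = c 0 * T 0 + (\<Sum>s<j. c (Suc s) * T (Suc s))"
      unfolding Suc sum.atMost_Suc_shift lessThan_Suc_atMost ..
    ultimately show ?thesis
      by (simp add: sum_lessThan_telescope)
  qed
  also have "D j = 0"
    by (simp add: D_def)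
  finally show ?thesis
    by (simp add: \<theta>_def)
qed

lemma phi_eq_krawtchouk: "phi q n j y = krawtchouk q n j (real (hdist n x0 y))"
  unfolding phi_def krawtchouk_def krawtchouk_coeff_def Let_def atLeast0AtMost
  by (rule sum.cong) (auto simp: mult_ac)

subsection \<open>Eigenfunctions of the walk\<close>

lemma sum_trans_p_phi:
  assumes "x \<in> Xn q n" "j \<le> n" "n \<ge> 1" "q \<ge> 2"
  shows "(\<Sum>y\<in>Xn q n. trans_p q n x y * phi q n j y)
       = (1 - real j * real q / (real n * (real q - 1))) * phi q n j x"
proof -
  have "real n * (real q - 1) \<noteq> 0"
    using assms by simp
  then show ?thesis
    unfolding sum_trans_p[OF assms(1)] phi_eq_krawtchouk sum_neighbours_radial[OF assms(1)]
      radial_neighbour_sum_krawtchouk[OF assms(2,4)]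
    by (simp add: field_simps)
qed

lemma sum_trans_pk_eigenfunction:
  assumes eigen: "\<And>y. y \<in> Xn q n \<Longrightarrow> (\<Sum>x\<in>Xn q n. trans_p q n y x * f x) = \<theta> * f y"
    and z: "z \<in> Xn q n"
  shows "(\<Sum>x\<in>Xn q n. trans_pk q n k z x * f x) = \<theta> ^ k * f z"
proof (induction k)
  case 0
  have "(\<Sum>x\<in>Xn q n. trans_pk q n 0 z x * f x) = (\<Sum>x\<in>Xn q n. if z = x then f x else 0)"
    by (rule sum.cong) auto
  also have "\<dots> = f z"
    using z finite_Xn by simp
  finally show ?case
    by simp
next
  case (Suc k)
  have "(\<Sum>x\<in>Xn q n. trans_pk q n (Suc k) z x * f x)
      = (\<Sum>x\<in>Xn q n. \<Sum>y\<in>Xn q n. trans_pk q n k z y * (trans_p q n y x * f x))"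
    by (simp add: sum_distrib_right mult.assoc)
  also have "\<dots> = (\<Sum>y\<in>Xn q n. trans_pk q n k z y * (\<Sum>x\<in>Xn q n. trans_p q n y x * f x))"
    by (subst sum.swap) (simp add: sum_distrib_left)
  also have "\<dots> = (\<Sum>y\<in>Xn q n. trans_pk q n k z y * (\<theta> * f y))"
    by (rule sum.cong) (simp_all add: eigen)
  also have "\<dots> = \<theta> * (\<Sum>y\<in>Xn q n. trans_pk q n k z y * f y)"
    by (simp add: sum_distrib_left mult_ac)
  finally show ?case
    using Suc by simp
qed

lemma phi_x0: "phi q n j x0 = 1"
proof -
  have "hdist n x0 x0 = 0"
    by (simp add: hdist_def)
  then have "phi q n j x0 = (\<Sum>r\<in>{0..j}. if r = 0 then 1 else 0)"
    unfolding phi_def Let_def by (intro sum.cong) (auto simp: pochhammer_0_left)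
  then show ?thesis
    by simp
qed

lemma Exp_nu_conv_phi:
  assumes "n \<ge> 1" "q \<ge> 2" "j \<le> n"
  shows "Exp q n (nu_conv q n k) (phi q n j) = (1 - real j * real q / (real n * (real q - 1))) ^ k"
proof -
  have "Exp q n (nu_conv q n k) (phi q n j) = (\<Sum>x\<in>Xn q n. trans_pk q n k x0 x * phi q n j x)"
    unfolding Exp_def nu_conv_def by (simp add: mult.commute)
  also have "\<dots> = (1 - real j * real q / (real n * (real q - 1))) ^ k"
    using sum_trans_pk_eigenfunction[OF sum_trans_p_phi x0_in_Xn] assms by (simp add: phi_x0)
  finally show ?thesis .
qed

subsection \<open>The variance of \<open>\<phi>\<^sub>1\<close>\<close>

lemma Exp_linear_combination:
  "Exp q n \<mu> (\<lambda>x. a * f x + b * g x + c * h x) = a * Exp q n \<mu> f + b * Exp q n \<mu> g + c * Exp q n \<mu> h"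
  by (simp add: Exp_def sum.distrib sum_distrib_left algebra_simps)

lemma phi1_squared:
  fixes q n :: nat
  assumes "n \<ge> 2"
  defines "p \<equiv> real q / (real q - 1)"
  shows "(phi q n 1 y)\<^sup>2 = (p - 1) / real n * phi q n 0 y + (2 - p) / real n * phi q n 1 y
                           + (real n - 1) / real n * phi q n 2 y"
proof -
  define l where "l = real (hdist n x0 y)"
  have "real n \<noteq> 0" "real n - 1 \<noteq> 0"
    using assms by auto
  moreover have phi: "phi q n 0 y = 1" "phi q n 1 y = 1 - l * p / real n"
    "phi q n 2 y = 1 - 2 * l * p / real n + p\<^sup>2 * l * (l - 1) / (real n * (real n - 1))"
    using assms unfolding phi_def Let_def p_def[symmetric] l_def[symmetric]
    by (simp_all add: eval_nat_numeral pochhammer_Suc field_simps)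
  ultimately show ?thesis
    unfolding phi by (simp add: field_simps power2_eq_square)
qed

lemma Var_nu_conv_phi1:
  fixes q n :: nat
  assumes "n \<ge> 2" "q \<ge> 2"
  defines "p \<equiv> real q / (real q - 1)" and "t \<equiv> real q / (real n * (real q - 1))"
  shows "Var q n (nu_conv q n k) (phi q n 1)
       = (p - 1) / real n + (2 - p) / real n * (1 - t) ^ k + (real n - 1) / real n * (1 - 2 * t) ^ k
         - ((1 - t) ^ k)\<^sup>2"
proof -
  have "Exp q n (nu_conv q n k) (phi q n 0) = 1"
    and "Exp q n (nu_conv q n k) (phi q n 1) = (1 - t) ^ k"
    and "Exp q n (nu_conv q n k) (phi q n 2) = (1 - 2 * t) ^ k"
    using Exp_nu_conv_phi[of n q _ k] assms by (simp_all add: t_def)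
  then show ?thesis
    unfolding Var_def phi1_squared[OF assms(1), folded p_def] Exp_linear_combination by (simp add: p_def)
qed

lemma variance_expression_le:
  fixes n p t :: real
  assumes "n \<ge> 1" "p \<le> 2" "t \<ge> 0" "1 - 2 * t \<ge> 0"
  shows "(p - 1) / n + (2 - p) / n * (1 - t) ^ k + (n - 1) / n * (1 - 2 * t) ^ k - ((1 - t) ^ k)\<^sup>2
         \<le> 1 / n"
proof -
  define a where "a = (1 - t) ^ k"
  define b where "b = (1 - 2 * t) ^ k"
  have "a \<le> 1" "b \<ge> 0"
    using assms by (simp_all add: a_def b_def power_le_one)
  have "1 - 2 * t \<le> (1 - t)\<^sup>2"
    by (simp add: power2_eq_square algebra_simps)
  then have "b \<le> ((1 - t)\<^sup>2) ^ k"
    unfolding b_def using assms(4) by (rule power_mono)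
  also have "\<dots> = a\<^sup>2"
    unfolding a_def power_mult[symmetric] by (simp add: mult.commute)
  finally have "b \<le> a\<^sup>2" .
  have "(2 - p) / n * a \<le> (2 - p) / n"
    using assms \<open>a \<le> 1\<close> by (intro mult_left_le) simp_all
  moreover have "(n - 1) / n * b \<le> b"
    using assms \<open>b \<ge> 0\<close> by (intro mult_left_le_one_le) simp_all
  ultimately show ?thesis
    using \<open>b \<le> a\<^sup>2\<close> by (simp add: a_def[symmetric] b_def[symmetric] diff_divide_distrib)
qed

theorem lemma4p3:
  fixes n q k :: nat
  assumes "n \<ge> 1" and "q \<ge> 2"
  shows "(\<forall>j\<in>{0..n}. Exp q n (nu_conv q n k) (phi q n j)
            = (1 - real j * real q / (real n * (real q - 1))) ^ k)
       \<and> ((real n - 2) * (real q - 1) \<ge> 2 \<longrightarrow> Var q n (nu_conv q n k) (phi q n 1) \<le> 1 / real n)"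
proof (intro conjI ballI impI)
  fix j assume "j \<in> {0..n}"
  then show "Exp q n (nu_conv q n k) (phi q n j) = (1 - real j * real q / (real n * (real q - 1))) ^ k"
    using Exp_nu_conv_phi assms by auto
next
  assume h: "(real n - 2) * (real q - 1) \<ge> 2"
  have q1: "real q - 1 \<ge> 1"
    using assms by simp
  have "n > 2"
  proof (rule ccontr)
    assume "\<not> n > 2"
    then have "(real n - 2) * (real q - 1) \<le> 0"
      using q1 by (simp add: mult_nonpos_nonneg)
    with h show False
      by simp
  qed
  have "real q / (real q - 1) \<le> 2"
    using q1 by (simp add: divide_le_eq)
  moreover have "2 * real q \<le> real n * (real q - 1)"
    using h by (simp add: algebra_simps)
  then have "1 - 2 * (real q / (real n * (real q - 1))) \<ge> 0"
    using q1 \<open>n > 2\<close> by (simp add: divide_le_eq)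
  ultimately show "Var q n (nu_conv q n k) (phi q n 1) \<le> 1 / real n"
    unfolding Var_nu_conv_phi1[OF less_imp_le[OF \<open>n > 2\<close>] assms(2)] using \<open>n > 2\<close> q1
    by (intro variance_expression_le) simp_all
qed

end
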